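(* Let $k\ge 3$ and $s\geq 2k$ be integers, and let $\eta>0$. Then there exists a number $c=c(k,s,\eta)>0$ such that for every $A\ge 1$, the number of $\mathbf{a}\in(\mathbb{Z}\setminus\{0\})^s$ with $|\mathbf{a}|\leq A$ for which the equation $a_1x_1^k+\dots+a_sx_s^k=0$ admits an integral solution $\mathbf{x}\in\mathbb{Z}^s$ in the range $0<|\mathbf{x}|\leq c|\mathbf{a}|^{1/(s-k)}$ does not exceed $\eta A^s$.
   Context: $|\mathbf{x}|=\max_j|x_j|$, and similarly for $\mathbf{a}$. *)

theory Defs
  imports Complex_Main
begin

definition supnorm :: "int list \<Rightarrow> int" where
  "supnorm v = Max (insert 0 (abs ` set v))"

definition diag_form :: "nat \<Rightarrow> int list \<Rightarrow> int list \<Rightarrow> int" where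
  "diag_form k a x = (\<Sum>i<length a. a ! i * (x ! i) ^ k)"

end

theory Submission
  imports Defs "HOL-Computational_Algebra.Primes"
begin

text \<open>
  It suffices to count primitive solutions x: dividing x by the gcd of its entries keeps it a
  solution and does not increase |x|. Let x be primitive with |x| = m attained at x_j. Solving
  for a_j, the coefficient vectors a with |a| \<le> A and a_1 x_1^k + ... + a_s x_s^k = 0 inject into
  the solutions of a linear congruence modulo m^k in the other s - 1 coordinates, whose
  coefficients x_i^k are jointly coprime to m^k. Counting those coordinate by coordinate gives at
  most B^(s-1)/m^k + 3^(s-1) B^(s-2) of them, where B = 2A + 1. As there are O(m^(s-1)) vectors
  with |x| = m, summing over m \<le> N = c A^(1/(s-k)) bounds the count by
  O(B^(s-1) N^(s-k) + B^(s-2) N^s), and both terms are O(c A^s): the second because s \<ge> 2k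
  gives N^s \<le> c A^(s/(s-k)) \<le> c A^2.

  The argument only uses k \<ge> 1.
\<close>

definition dot :: "int list \<Rightarrow> int list \<Rightarrow> int" where
  "dot a y = sum_list (map2 (*) a y)"

lemma dot_Nil1 [simp]: "dot [] y = 0"
  by (simp add: dot_def)

lemma dot_Nil2 [simp]: "dot a [] = 0"
  by (simp add: dot_def)

lemma dot_Cons [simp]: "dot (h # t) (y # ys) = h * y + dot t ys"
  by (simp add: dot_def)

lemma dot_append: "length a = length y \<Longrightarrow> dot (a @ b) (y @ z) = dot a y + dot b z"
  by (simp add: dot_def)

lemma dvd_dot: "(\<And>y. y \<in> set ys \<Longrightarrow> g dvd y) \<Longrightarrow> g dvd dot a ys"
proof (induction ys arbitrary: a)
  case (Cons y ys)
  then show ?case by (cases a) auto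
qed simp

lemma dot_map_mult: "dot a (map (\<lambda>t. c * f t) xs) = c * dot a (map f xs)"
proof (induction xs arbitrary: a)
  case (Cons y ys)
  then show ?case by (cases a) (auto simp: algebra_simps)
qed simp

lemma dot_eq_sum: "length a = length y \<Longrightarrow> dot a y = (\<Sum>i<length a. a ! i * y ! i)"
proof (induction a arbitrary: y)
  case (Cons h t)
  then obtain z zs where "y = z # zs" by (cases y) auto
  with Cons show ?case by (simp add: sum.lessThan_Suc_shift del: sum.lessThan_Suc)
qed simp

lemma diag_form_eq_dot: "length a = length x \<Longrightarrow> diag_form k a x = dot a (map (\<lambda>t. t ^ k) x)"
  by (simp add: diag_form_def dot_eq_sum)

lemma abs_le_supnorm: "t \<in> set x \<Longrightarrow> \<bar>t\<bar> \<le> supnorm x"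
  unfolding supnorm_def by (intro Max_ge) auto

lemma supnorm_nonneg: "supnorm x \<ge> 0"
  unfolding supnorm_def by (intro Max_ge) auto

lemma supnorm_le_iff: "m \<ge> 0 \<Longrightarrow> supnorm x \<le> m \<longleftrightarrow> (\<forall>t\<in>set x. \<bar>t\<bar> \<le> m)"
  unfolding supnorm_def by (subst Max_le_iff) auto

lemma supnorm_pos_iff: "0 < supnorm x \<longleftrightarrow> \<not> set x \<subseteq> {0}"
  using supnorm_le_iff[of 0 x] supnorm_nonneg[of x] by auto

lemma supnorm_pos_if_Gcd_eq_1: "Gcd (set x) = 1 \<Longrightarrow> 0 < supnorm x"
  by (metis supnorm_pos_iff Gcd_0_iff zero_neq_one)

lemma supnorm_attained:
  assumes "x \<noteq> []"
  obtains j where "j < length x" "\<bar>x ! j\<bar> = supnorm x"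
proof -
  have fin: "finite (insert 0 (abs ` set x))" by simp
  have "supnorm x \<in> insert 0 (abs ` set x)"
    unfolding supnorm_def by (rule Max_in[OF fin]) simp
  moreover have "\<bar>x ! 0\<bar> \<le> supnorm x"
    using assms by (intro abs_le_supnorm) simp
  ultimately have "\<exists>j<length x. \<bar>x ! j\<bar> = supnorm x"
    using assms by (auto simp: in_set_conv_nth intro: exI[of _ 0])
  with that show ?thesis by blast
qed

lemma supnorm_le_map_mult:
  assumes "d \<noteq> 0"
  shows "supnorm x \<le> supnorm (map ((*) d) x)"
proof (subst supnorm_le_iff[OF supnorm_nonneg], intro ballI)
  fix t assume "t \<in> set x"
  then have "\<bar>d * t\<bar> \<le> supnorm (map ((*) d) x)" by (intro abs_le_supnorm) auto
  moreover have "1 * \<bar>t\<bar> \<le> \<bar>d\<bar> * \<bar>t\<bar>" using assms by (intro mult_right_mono) auto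
  ultimately show "\<bar>t\<bar> \<le> supnorm (map ((*) d) x)" by (simp add: abs_mult)
qed

definition int_cube :: "nat \<Rightarrow> int \<Rightarrow> int list set" where
  "int_cube s m = {x. set x \<subseteq> {-m..m} \<and> length x = s}"

lemma finite_int_cube: "finite (int_cube s m)"
  by (simp add: int_cube_def finite_lists_length_eq)

lemma card_int_cube: "m \<ge> 0 \<Longrightarrow> card (int_cube s m) = nat (2 * m + 1) ^ s"
  by (simp add: int_cube_def card_lists_length_eq)

lemma int_cube_eq: "m \<ge> 0 \<Longrightarrow> int_cube s m = {x. length x = s \<and> supnorm x \<le> m}"
  by (auto simp: int_cube_def supnorm_le_iff abs_le_iff subset_iff)

lemma card_residue_class_le:
  fixes A q h0 :: int
  assumes A: "A \<ge> 0" and q: "q > 0"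
  shows "real (card {h \<in> {-A..A}. h mod q = h0 mod q}) \<le> (2 * A + 1) / q + 1"
proof -
  let ?S = "{h \<in> {-A..A}. h mod q = h0 mod q}"
  let ?f = "\<lambda>h. (h + A) div q"
  have inj: "inj_on ?f ?S"
  proof (rule inj_onI)
    fix u v assume u: "u \<in> ?S" and v: "v \<in> ?S" and "?f u = ?f v"
    moreover have "(u + A) mod q = (v + A) mod q"
      using u v by (metis (mono_tags, lifting) mem_Collect_eq mod_add_left_eq)
    ultimately have "u + A = v + A" by (metis div_mult_mod_eq)
    then show "u = v" by simp
  qed
  have image: "?f ` ?S \<subseteq> {0..(2 * A) div q}"
  proof
    fix z assume "z \<in> ?f ` ?S"
    then obtain h where "h \<in> {-A..A}" and z: "z = (h + A) div q" by auto
    with A q show "z \<in> {0..(2 * A) div q}"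
      by (simp add: pos_imp_zdiv_nonneg_iff zdiv_mono1)
  qed
  have "card ?S = card (?f ` ?S)"
    using inj by (rule card_image[symmetric])
  also have "\<dots> \<le> card {0..(2 * A) div q}"
    using image by (intro card_mono) auto
  also have "\<dots> = nat ((2 * A) div q + 1)"
    using A q by (simp add: pos_imp_zdiv_nonneg_iff)
  finally have "real (card ?S) \<le> real (nat ((2 * A) div q + 1))"
    by (rule of_nat_mono)
  moreover have "real_of_int ((2 * A) div q) \<le> (2 * A) / q"
    using real_of_int_div4[of "2 * A" q] by simp
  moreover have "real_of_int (2 * A) / q \<le> (2 * A + 1) / q"
    using q by (simp add: divide_right_mono)
  ultimately show ?thesis
    using A q by (simp add: pos_imp_zdiv_nonneg_iff)
qed

lemma card_linear_congruence_le:
  fixes A G y r :: int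
  assumes A: "A \<ge> 0" and G: "G > 0"
  shows "real (card {h \<in> {-A..A}. G dvd r - h * y}) \<le> (2 * A + 1) * gcd G y / G + 1"
proof (cases "{h \<in> {-A..A}. G dvd r - h * y} = {}")
  case True
  have "0 \<le> real_of_int (2 * A + 1) * gcd G y / G" using A G by simp
  then show ?thesis unfolding True by simp
next
  case False
  then obtain h0 where h0: "h0 \<in> {-A..A}" "G dvd r - h0 * y" by blast
  define g where "g = gcd G y"
  define q where "q = G div g"
  have g: "g > 0" using G by (simp add: g_def)
  have Gq: "G = g * q" by (simp add: g_def q_def)
  with G g have q: "q > 0" by (simp add: zero_less_mult_iff)
  obtain y' where y: "y = g * y'" by (metis g_def gcd_dvd2 dvdE)
  have "y div g = y'" using y g by simp
  with div_gcd_coprime[of G y] G have "coprime q y'" by (simp add: q_def g_def)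
  have sub: "{h \<in> {-A..A}. G dvd r - h * y} \<subseteq> {h \<in> {-A..A}. h mod q = h0 mod q}"
  proof safe
    fix h assume "G dvd r - h * y"
    with h0 have "G dvd (r - h * y) - (r - h0 * y)" by (blast intro: dvd_diff)
    then have "g * q dvd g * ((h0 - h) * y')" by (simp add: Gq y algebra_simps)
    with g \<open>coprime q y'\<close> have "q dvd h0 - h" by (simp add: coprime_dvd_mult_left_iff)
    then show "h mod q = h0 mod q" by (simp add: mod_eq_dvd_iff dvd_diff_commute)
  qed
  have "card {h \<in> {-A..A}. G dvd r - h * y} \<le> card {h \<in> {-A..A}. h mod q = h0 mod q}"
    by (rule card_mono[OF finite_subset[of _ "{-A..A}"] sub]) auto
  then have "real (card {h \<in> {-A..A}. G dvd r - h * y}) \<le> (2 * A + 1) / q + 1"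
    using card_residue_class_le[OF A q, of h0] by linarith
  also have "(2 * A + 1) / q = (2 * A + 1) * gcd G y / G"
    unfolding g_def[symmetric] using g q by (simp add: Gq)
  finally show ?thesis .
qed

definition congr_sols :: "int \<Rightarrow> int list \<Rightarrow> int \<Rightarrow> int \<Rightarrow> int list set" where
  "congr_sols A y M r = {a. length a = length y \<and> set a \<subseteq> {-A..A} \<and> M dvd dot a y - r}"

lemma finite_congr_sols: "finite (congr_sols A y M r)"
  by (rule finite_subset[OF _ finite_int_cube]) (auto simp: congr_sols_def int_cube_def)

lemma congr_sols_Nil: "congr_sols A [] M r \<subseteq> {[]}"
  by (auto simp: congr_sols_def)

lemma congr_sols_Cons:
  "congr_sols A (y # ys) M r = (\<Union>h\<in>{-A..A}. (#) h ` congr_sols A ys M (r - h * y))"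
proof (intro equalityI subsetI)
  fix a assume a: "a \<in> congr_sols A (y # ys) M r"
  then obtain h t where a_eq: "a = h # t" by (cases a) (auto simp: congr_sols_def)
  have e: "dot t ys - (r - h * y) = dot a (y # ys) - r" by (simp add: a_eq)
  from a a_eq have "h \<in> {-A..A}" "t \<in> congr_sols A ys M (r - h * y)"
    by (auto simp: congr_sols_def e)
  with a_eq show "a \<in> (\<Union>h\<in>{-A..A}. (#) h ` congr_sols A ys M (r - h * y))" by blast
next
  fix a assume "a \<in> (\<Union>h\<in>{-A..A}. (#) h ` congr_sols A ys M (r - h * y))"
  then obtain h t where h: "h \<in> {-A..A}" and t: "t \<in> congr_sols A ys M (r - h * y)"
    and a_eq: "a = h # t" by blast
  have "dot t ys - (r - h * y) = dot a (y # ys) - r" by (simp add: a_eq)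
  with h t show "a \<in> congr_sols A (y # ys) M r" by (auto simp: congr_sols_def a_eq)
qed

lemma congr_sols_eq_empty:
  assumes "\<not> gcd M (Gcd (set y)) dvd r"
  shows "congr_sols A y M r = {}"
proof (rule ccontr)
  assume "congr_sols A y M r \<noteq> {}"
  then obtain a where "M dvd dot a y - r" by (auto simp: congr_sols_def)
  then have "gcd M (Gcd (set y)) dvd dot a y - r" by (blast intro: dvd_trans[OF gcd_dvd1])
  moreover have "gcd M (Gcd (set y)) dvd dot a y"
    by (rule dvd_dot) (blast intro: dvd_trans[OF gcd_dvd2 Gcd_dvd])
  ultimately have "gcd M (Gcd (set y)) dvd dot a y - (dot a y - r)"
    using dvd_diff by blast
  with assms show False by simp
qed

text \<open>Fixing the first coordinate h turns the congruence into one for the remaining coordinates,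
  which is solvable only if gcd M (Gcd (set ys)) divides r - h y.\<close>
lemma card_congr_sols_Cons_le:
  fixes A M :: int
  assumes A: "A \<ge> 0" and M: "M > 0" and bound: "\<And>r. real (card (congr_sols A ys M r)) \<le> b"
  shows "real (card (congr_sols A (y # ys) M r))
    \<le> ((2 * A + 1) * gcd (gcd M (Gcd (set ys))) y / gcd M (Gcd (set ys)) + 1) * b"
proof -
  define G where "G = gcd M (Gcd (set ys))"
  define T where "T = {h \<in> {-A..A}. G dvd r - h * y}"
  have "G > 0" using M by (simp add: G_def)
  have b: "b \<ge> 0" using bound[of 0] by linarith
  have "card (congr_sols A (y # ys) M r) = (\<Sum>h\<in>{-A..A}. card ((#) h ` congr_sols A ys M (r - h * y)))"
    unfolding congr_sols_Cons by (rule card_UN_disjoint) (auto simp: finite_congr_sols)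
  also have "\<dots> = (\<Sum>h\<in>{-A..A}. card (congr_sols A ys M (r - h * y)))"
    by (intro sum.cong refl card_image) (simp add: inj_on_def)
  also have "\<dots> = (\<Sum>h\<in>T. card (congr_sols A ys M (r - h * y)))"
    by (rule sum.mono_neutral_right) (auto simp: T_def G_def congr_sols_eq_empty)
  finally have "real (card (congr_sols A (y # ys) M r))
      = (\<Sum>h\<in>T. real (card (congr_sols A ys M (r - h * y))))"
    by simp
  also have "\<dots> \<le> real (card T) * b"
    using sum_bounded_above[of T "\<lambda>h. real (card (congr_sols A ys M (r - h * y)))" b] bound by simp
  also have "\<dots> \<le> ((2 * A + 1) * gcd G y / G + 1) * b"
    unfolding T_def using card_linear_congruence_le[OF A \<open>G > 0\<close>] b by (rule mult_right_mono)
  finally show ?thesis by (simp add: G_def)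
qed

text \<open>The second term absorbs the rounding error of card_linear_congruence_le in each coordinate.\<close>
lemma card_congr_sols_le:
  fixes A M r :: int
  assumes A: "A \<ge> 0" and M: "M > 0"
  defines "B \<equiv> real_of_int (2 * A + 1)"
  shows "real (card (congr_sols A y M r))
    \<le> B ^ length y * gcd M (Gcd (set y)) / M + 3 ^ length y * B ^ length y / B"
proof (induction y arbitrary: r)
  case Nil
  have "card (congr_sols A [] M r) \<le> 1"
    using card_mono[OF _ congr_sols_Nil] by fastforce
  then have "real (card (congr_sols A [] M r)) \<le> 1" by simp
  moreover have "0 \<le> 1 / B" using A by (simp add: B_def)
  ultimately have "real (card (congr_sols A [] M r)) \<le> 1 + 1 / B" by linarith
  then show ?case using M by simp
next
  case (Cons y ys)
  let ?n = "length ys"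
  define g where "g = real_of_int (gcd M (Gcd (set (y # ys))))"
  define G where "G = real_of_int (gcd M (Gcd (set ys)))"
  have B: "B \<ge> 1" using A by (simp add: B_def)
  have gG: "gcd (gcd M (Gcd (set ys))) y = gcd M (Gcd (set (y # ys)))"
    by (simp add: ac_simps)
  have "gcd M (Gcd (set (y # ys))) dvd gcd M (Gcd (set ys))"
    by (simp add: dvd_trans[OF gcd_dvd2 gcd_dvd2])
  then have g: "0 < g" "g \<le> G" using M by (auto simp: g_def G_def zdvd_imp_le)
  have G: "G \<le> real_of_int M" using M by (simp add: G_def zdvd_imp_le)
  have "real (card (congr_sols A (y # ys) M r))
      \<le> (B * (g / G) + 1) * (B ^ ?n * (G / M) + 3 ^ ?n * B ^ ?n / B)"
    using card_congr_sols_Cons_le[OF A M Cons.IH, of y r] unfolding gG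
    by (simp add: B_def g_def G_def)
  also have "\<dots> = B ^ Suc ?n * g / M
      + (B ^ ?n * (G / M) + 3 ^ ?n * B ^ ?n * (g / G) + 3 ^ ?n * B ^ ?n / B)"
    using g B M by (simp add: field_simps)
  also have "\<dots> \<le> B ^ Suc ?n * g / M + 3 * (3 ^ ?n * B ^ ?n)"
  proof -
    have "G / M \<le> 1" using g G by simp
    also have "1 \<le> (3::real) ^ ?n" by simp
    finally have "B ^ ?n * (G / M) \<le> B ^ ?n * 3 ^ ?n"
      by (rule mult_left_mono) (use B in simp)
    then have "B ^ ?n * (G / M) \<le> 3 ^ ?n * B ^ ?n" by (simp only: mult.commute)
    moreover have "3 ^ ?n * B ^ ?n * (g / G) \<le> 3 ^ ?n * B ^ ?n"
      using g B by (intro mult_left_le) auto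
    moreover have "3 ^ ?n * B ^ ?n / B \<le> 3 ^ ?n * B ^ ?n"
      using divide_left_mono[of 1 B "3 ^ ?n * B ^ ?n"] B by simp
    ultimately show ?thesis by linarith
  qed
  also have "\<dots> = B ^ length (y # ys) * g / M + 3 ^ length (y # ys) * B ^ length (y # ys) / B"
    using B by simp
  finally show ?case by (simp add: g_def)
qed

definition remove_nth :: "nat \<Rightarrow> 'a list \<Rightarrow> 'a list" where
  "remove_nth j xs = take j xs @ drop (Suc j) xs"

lemma length_remove_nth: "j < length xs \<Longrightarrow> length (remove_nth j xs) = length xs - 1"
  by (simp add: remove_nth_def)

lemma set_remove_nth_subset: "set (remove_nth j xs) \<subseteq> set xs"
  unfolding remove_nth_def using set_take_subset set_drop_subset by fastforce

lemma set_insert_nth_remove_nth: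
  assumes "j < length xs"
  shows "set xs = insert (xs ! j) (set (remove_nth j xs))"
proof -
  have "set xs = set (take j xs @ xs ! j # drop (Suc j) xs)"
    using assms id_take_nth_drop by metis
  then show ?thesis by (auto simp: remove_nth_def)
qed

lemma remove_nth_inject:
  assumes "remove_nth j xs = remove_nth j ys" "xs ! j = ys ! j" "j < length xs" "length xs = length ys"
  shows "xs = ys"
proof -
  have "take j xs = take j ys" "drop (Suc j) xs = drop (Suc j) ys"
    using assms by (auto simp: remove_nth_def)
  with assms show ?thesis by (metis id_take_nth_drop)
qed

lemma dot_remove_nth:
  assumes "j < length a" "length a = length y"
  shows "dot a y = dot (remove_nth j a) (remove_nth j y) + a ! j * y ! j"
proof -
  have "dot a y = dot (take j a @ a ! j # drop (Suc j) a) (take j y @ y ! j # drop (Suc j) y)"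
    using assms by (metis id_take_nth_drop)
  with assms show ?thesis by (simp add: remove_nth_def dot_append)
qed

text \<open>A solution of dot a y = 0 is determined by the coordinates other than j, and those
  satisfy the congruence dot a' y' = 0 modulo y_j.\<close>
lemma card_dot_eq_0_le_card_congr_sols:
  assumes j: "j < length y" and yj: "y ! j \<noteq> 0"
  shows "card {a. length a = length y \<and> set a \<subseteq> {-A..A} \<and> dot a y = 0}
    \<le> card (congr_sols A (remove_nth j y) \<bar>y ! j\<bar> 0)"
proof -
  define E where "E = {a. length a = length y \<and> set a \<subseteq> {-A..A} \<and> dot a y = 0}"
  have split: "dot (remove_nth j a) (remove_nth j y) = - (a ! j * y ! j)" if "a \<in> E" for a
    using that dot_remove_nth[of j a y] j by (simp add: E_def)
  have inj: "inj_on (remove_nth j) E"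
  proof (rule inj_onI)
    fix a b assume a: "a \<in> E" and b: "b \<in> E" and eq: "remove_nth j a = remove_nth j b"
    from split[OF a] split[OF b] have "a ! j * y ! j = b ! j * y ! j" unfolding eq by linarith
    with yj have "a ! j = b ! j" by (rule mult_right_cancel[THEN iffD1])
    moreover have "j < length a" "length a = length b" using a b j by (simp_all add: E_def)
    ultimately show "a = b" using eq by (blast intro: remove_nth_inject)
  qed
  have image: "remove_nth j ` E \<subseteq> congr_sols A (remove_nth j y) \<bar>y ! j\<bar> 0"
  proof
    fix a' assume "a' \<in> remove_nth j ` E"
    then obtain a where a: "a \<in> E" and a': "a' = remove_nth j a" by blast
    then show "a' \<in> congr_sols A (remove_nth j y) \<bar>y ! j\<bar> 0"
      using j set_remove_nth_subset[of j a] split[OF a]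
      by (auto simp: congr_sols_def E_def remove_nth_def)
  qed
  have "card E = card (remove_nth j ` E)" using inj by (rule card_image[symmetric])
  also have "\<dots> \<le> card (congr_sols A (remove_nth j y) \<bar>y ! j\<bar> 0)"
    by (rule card_mono[OF finite_congr_sols image])
  finally show ?thesis unfolding E_def .
qed

lemma Gcd_map_power_eq_1:
  fixes x :: "int list"
  assumes "Gcd (set x) = 1"
  shows "Gcd (set (map (\<lambda>t. t ^ k) x)) = 1"
proof (rule ccontr)
  let ?g = "Gcd (set (map (\<lambda>t. t ^ k) x))"
  assume "?g \<noteq> 1"
  moreover have "?g \<noteq> 0"
  proof
    assume "?g = 0"
    then have "set x \<subseteq> {0}" by auto
    with assms show False by (metis Gcd_0_iff zero_neq_one)
  qed
  ultimately have "\<not> is_unit ?g"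
    using Gcd_int_greater_eq_0[of "set (map (\<lambda>t. t ^ k) x)"] by auto
  with \<open>?g \<noteq> 0\<close> obtain p where p: "p dvd ?g" "prime p"
    using prime_divisor_exists by blast
  have "p dvd t" if "t \<in> set x" for t
  proof -
    from that have "?g dvd t ^ k" by (intro Gcd_dvd) simp
    with p(1) have "p dvd t ^ k" by (rule dvd_trans)
    with p(2) show ?thesis by (rule prime_dvd_power)
  qed
  then have "p dvd Gcd (set x)" by (intro Gcd_greatest) auto
  with assms p(2) show False by (simp add: not_prime_unit)
qed

lemma primitive_part:
  fixes x :: "int list"
  assumes "0 < supnorm x"
  obtains d x' where "d > 0" "x = map ((*) d) x'" "Gcd (set x') = 1"
proof -
  define d where "d = Gcd (set x)"
  have "d \<noteq> 0" using assms by (simp add: d_def supnorm_pos_iff)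
  moreover have "d \<ge> 0" unfolding d_def by (rule Gcd_int_greater_eq_0)
  ultimately have d: "d > 0" by linarith
  define x' where "x' = map (\<lambda>t. t div d) x"
  have "\<forall>t\<in>set x. d * (t div d) = t" by (simp add: d_def)
  then have x: "x = map ((*) d) x'" by (simp add: x'_def map_idI)
  have "Gcd (set x) = Gcd ((*) d ` set x')" by (subst x) simp
  then have "d = Gcd ((*) d ` set x')" by (simp only: d_def[symmetric])
  also have "\<dots> = normalize (d * Gcd (set x'))" by (rule Gcd_mult)
  also have "\<dots> = d * Gcd (set x')" using d by (simp add: abs_mult)
  finally have "Gcd (set x') = 1" using d by simp
  then show ?thesis by (rule that[OF d x])
qed

lemma primitive_solution_below:
  assumes "0 < supnorm x" and zero: "dot a (map (\<lambda>t. t ^ k) x) = 0"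
  obtains x' where "length x' = length x" "Gcd (set x') = 1" "0 < supnorm x'"
    "supnorm x' \<le> supnorm x" "dot a (map (\<lambda>t. t ^ k) x') = 0"
proof -
  obtain d x' where d: "d > 0" and x: "x = map ((*) d) x'" and primitive: "Gcd (set x') = 1"
    using primitive_part[OF assms(1)] by blast
  have "map (\<lambda>t. t ^ k) x = map (\<lambda>t. d ^ k * t ^ k) x'"
    by (simp add: x power_mult_distrib)
  with zero have "d ^ k * dot a (map (\<lambda>t. t ^ k) x') = 0"
    by (simp add: dot_map_mult)
  with d have "dot a (map (\<lambda>t. t ^ k) x') = 0" by simp
  moreover have "0 < supnorm x'"
    using primitive by (rule supnorm_pos_if_Gcd_eq_1)
  moreover have "supnorm x' \<le> supnorm x"
    using d x supnorm_le_map_mult[of d x'] by simp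
  ultimately show ?thesis using that primitive x by simp
qed

lemma card_dot_powers_eq_0_le:
  fixes A :: int and x :: "int list"
  assumes A: "A \<ge> 0" and primitive: "Gcd (set x) = 1"
  defines "B \<equiv> real_of_int (2 * A + 1)" and "n \<equiv> length x - 1"
  shows "real (card {a. length a = length x \<and> set a \<subseteq> {-A..A} \<and> dot a (map (\<lambda>t. t ^ k) x) = 0})
    \<le> B ^ n / supnorm x ^ k + 3 ^ n * B ^ n / B"
proof -
  define y where "y = map (\<lambda>t. t ^ k) x"
  have "x \<noteq> []" using primitive by auto
  then obtain j where j: "j < length x" and xj: "\<bar>x ! j\<bar> = supnorm x"
    using supnorm_attained by blast
  have "0 < supnorm x" using primitive by (rule supnorm_pos_if_Gcd_eq_1)
  then have yj: "\<bar>y ! j\<bar> = supnorm x ^ k" "y ! j \<noteq> 0"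
    using j xj by (auto simp: y_def power_abs)
  have "Gcd (set y) = 1" unfolding y_def by (rule Gcd_map_power_eq_1[OF primitive])
  then have "gcd \<bar>y ! j\<bar> (Gcd (set (remove_nth j y))) = 1"
    using j set_insert_nth_remove_nth[of j y] by (simp add: y_def)
  then have gcd1: "gcd (supnorm x ^ k) (Gcd (set (remove_nth j y))) = 1"
    by (simp only: yj(1))
  have n: "length (remove_nth j y) = n"
    using j by (simp add: y_def n_def length_remove_nth)
  have "card {a. length a = length x \<and> set a \<subseteq> {-A..A} \<and> dot a y = 0}
    \<le> card (congr_sols A (remove_nth j y) (supnorm x ^ k) 0)"
    using card_dot_eq_0_le_card_congr_sols[of j y A] j yj by (simp add: y_def)
  then have "real (card {a. length a = length x \<and> set a \<subseteq> {-A..A} \<and> dot a y = 0})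
    \<le> real (card (congr_sols A (remove_nth j y) (supnorm x ^ k) 0))"
    by (rule of_nat_mono)
  also have "\<dots> \<le> B ^ n / supnorm x ^ k + 3 ^ n * B ^ n / B"
    using card_congr_sols_le[OF A, of "supnorm x ^ k" "remove_nth j y" 0, unfolded n gcd1]
      \<open>0 < supnorm x\<close> by (simp add: B_def)
  finally show ?thesis unfolding y_def .
qed

lemma power_diff_power_le:
  fixes a b :: real
  assumes "0 \<le> b" "b \<le> a"
  shows "a ^ Suc n - b ^ Suc n \<le> Suc n * (a - b) * a ^ n"
proof (induction n)
  case (Suc n)
  have "a ^ Suc (Suc n) - b ^ Suc (Suc n) = a * (a ^ Suc n - b ^ Suc n) + (a - b) * b ^ Suc n"
    by (simp add: algebra_simps)
  also have "\<dots> \<le> a * (Suc n * (a - b) * a ^ n) + (a - b) * a ^ Suc n"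
    using Suc assms by (intro add_mono mult_left_mono power_mono) auto
  also have "\<dots> = Suc (Suc n) * (a - b) * a ^ Suc n"
    by (simp add: algebra_simps)
  finally show ?case .
qed simp

lemma card_supnorm_eq_le:
  fixes m :: int
  assumes m: "m \<ge> 1" and s: "s \<ge> 1"
  shows "real (card {x. length x = s \<and> supnorm x = m}) \<le> 2 * real s * 3 ^ (s - 1) * real_of_int m ^ (s - 1)"
proof -
  have sub: "int_cube s (m - 1) \<subseteq> int_cube s m"
    using m by (auto simp: int_cube_eq)
  have "{x. length x = s \<and> supnorm x = m} = int_cube s m - int_cube s (m - 1)"
    using m by (auto simp: int_cube_eq)
  then have "real (card {x. length x = s \<and> supnorm x = m})
      = real (card (int_cube s m)) - real (card (int_cube s (m - 1)))"
    using card_mono[OF finite_int_cube sub] by (simp add: card_Diff_subset[OF finite_int_cube sub])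
  also have "\<dots> = (2 * real_of_int m + 1) ^ Suc (s - 1) - (2 * real_of_int m - 1) ^ Suc (s - 1)"
    using m s by (simp add: card_int_cube)
  also have "\<dots> \<le> s * 2 * (2 * real_of_int m + 1) ^ (s - 1)"
    using power_diff_power_le[of "2 * real_of_int m - 1" "2 * real_of_int m + 1" "s - 1"] m s by simp
  also have "\<dots> \<le> s * 2 * (3 * real_of_int m) ^ (s - 1)"
    using m by (intro mult_left_mono power_mono) auto
  finally show ?thesis by (simp add: power_mult_distrib)
qed

lemma sum_supnorm_le:
  fixes N :: int and F :: "int \<Rightarrow> real"
  assumes s: "s \<ge> 1" and F: "\<And>m. 1 \<le> m \<Longrightarrow> F m \<ge> 0"
  shows "(\<Sum>x\<in>{x. length x = s \<and> 0 < supnorm x \<and> supnorm x \<le> N}. F (supnorm x))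
     \<le> (\<Sum>m=1..N. 2 * real s * 3 ^ (s - 1) * real_of_int m ^ (s - 1) * F m)"
proof -
  let ?P = "{x. length x = s \<and> 0 < supnorm x \<and> supnorm x \<le> N}"
  have "?P \<subseteq> int_cube s N"
    by (auto simp: int_cube_eq)
  then have "finite ?P" by (rule finite_subset) (rule finite_int_cube)
  then have "(\<Sum>x\<in>?P. F (supnorm x)) = (\<Sum>m=1..N. \<Sum>x\<in>{x\<in>?P. supnorm x = m}. F (supnorm x))"
    by (intro sum.group[symmetric]) auto
  also have "\<dots> = (\<Sum>m=1..N. real (card {x. length x = s \<and> supnorm x = m}) * F m)"
  proof (intro sum.cong refl)
    fix m assume "m \<in> {1..N}"
    then have "{x \<in> ?P. supnorm x = m} = {x. length x = s \<and> supnorm x = m}" by auto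
    then show "(\<Sum>x\<in>{x \<in> ?P. supnorm x = m}. F (supnorm x))
      = real (card {x. length x = s \<and> supnorm x = m}) * F m" by simp
  qed
  also have "\<dots> \<le> (\<Sum>m=1..N. 2 * real s * 3 ^ (s - 1) * real_of_int m ^ (s - 1) * F m)"
    using card_supnorm_eq_le[OF _ s] F by (intro sum_mono mult_right_mono) auto
  finally show ?thesis .
qed

lemma card_coeffs_with_zero_in_box_le:
  fixes A N :: int
  assumes A: "A \<ge> 0" and s: "s \<ge> 1"
  defines "B \<equiv> real_of_int (2 * A + 1)"
  shows "real (card {a. length a = s \<and> set a \<subseteq> {-A..A} \<and>
      (\<exists>x. length x = s \<and> 0 < supnorm x \<and> supnorm x \<le> N \<and> diag_form k a x = 0)})
    \<le> (\<Sum>m=1..N. 2 * real s * 3 ^ (s - 1) * real_of_int m ^ (s - 1) *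
         (B ^ (s - 1) / real_of_int m ^ k + 3 ^ (s - 1) * B ^ (s - 1) / B))"
proof -
  let ?S = "{a. length a = s \<and> set a \<subseteq> {-A..A} \<and>
      (\<exists>x. length x = s \<and> 0 < supnorm x \<and> supnorm x \<le> N \<and> diag_form k a x = 0)}"
  define P where "P = {x. length x = s \<and> 0 < supnorm x \<and> supnorm x \<le> N}"
  define Q where "Q = {x \<in> P. Gcd (set x) = 1}"
  define E where "E x = {a. length a = length x \<and> set a \<subseteq> {-A..A} \<and> dot a (map (\<lambda>t. t ^ k) x) = 0}"
    for x
  define F where "F m = B ^ (s - 1) / real_of_int m ^ k + 3 ^ (s - 1) * B ^ (s - 1) / B" for m :: int
  have B: "B \<ge> 1" using A by (simp add: B_def)
  have F: "F m \<ge> 0" if "1 \<le> m" for m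
    using that B by (simp add: F_def)
  have finite_P: "finite P"
    by (rule finite_subset[OF _ finite_int_cube[of s N]]) (auto simp: P_def int_cube_eq)
  then have finite_Q: "finite Q" by (simp add: Q_def)
  have finite_E: "finite (E x)" for x
    by (rule finite_subset[OF _ finite_int_cube[of "length x" A]]) (auto simp: E_def int_cube_def)
  have "?S \<subseteq> (\<Union>x\<in>Q. E x)"
  proof
    fix a assume "a \<in> ?S"
    then obtain x where a: "length a = s" "set a \<subseteq> {-A..A}" and x: "length x = s"
      "0 < supnorm x" "supnorm x \<le> N" "diag_form k a x = 0" by blast
    then have "dot a (map (\<lambda>t. t ^ k) x) = 0" by (simp add: diag_form_eq_dot)
    with x obtain x' where "length x' = length x" "Gcd (set x') = 1" "0 < supnorm x'"
      "supnorm x' \<le> supnorm x" "dot a (map (\<lambda>t. t ^ k) x') = 0"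
      by (blast elim: primitive_solution_below)
    with a x show "a \<in> (\<Union>x\<in>Q. E x)"
      by (auto simp: P_def Q_def E_def)
  qed
  then have "card ?S \<le> card (\<Union>x\<in>Q. E x)"
    using finite_Q finite_E by (intro card_mono) auto
  also have "\<dots> \<le> (\<Sum>x\<in>Q. card (E x))"
    using finite_Q by (rule card_UN_le)
  also have "real \<dots> \<le> (\<Sum>x\<in>Q. F (supnorm x))"
    unfolding of_nat_sum
    by (intro sum_mono) (use card_dot_powers_eq_0_le[OF A] in \<open>auto simp: E_def F_def B_def P_def Q_def\<close>)
  also have "\<dots> \<le> (\<Sum>x\<in>P. F (supnorm x))"
    using finite_P F by (intro sum_mono2) (auto simp: P_def Q_def)
  also have "\<dots> \<le> (\<Sum>m=1..N. 2 * real s * 3 ^ (s - 1) * real_of_int m ^ (s - 1) * F m)"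
    unfolding P_def using s F by (rule sum_supnorm_le)
  finally show ?thesis by (simp add: F_def)
qed

lemma three_power_mix_le:
  fixes X Z :: real
  assumes "0 \<le> X" "0 \<le> Z"
  shows "3 ^ (s - 1) * (X + 3 ^ (s - 1) * Z) \<le> 9 ^ s * (X + Z)"
proof -
  have "(3::real) ^ (s - 1) \<le> 3 ^ s" by (rule power_increasing) auto
  also have "\<dots> \<le> 9 ^ s" by (rule power_mono) auto
  finally have "(3::real) ^ (s - 1) \<le> 9 ^ s" .
  moreover have "(3::real) ^ (s - 1) * 3 ^ (s - 1) \<le> 3 ^ s * 3 ^ s"
    by (intro mult_mono power_increasing) auto
  then have "(3::real) ^ (s - 1) * 3 ^ (s - 1) \<le> 9 ^ s" by (simp flip: power_mult_distrib)
  ultimately show ?thesis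
    using assms by (simp add: distrib_left mult.assoc[symmetric] add_mono mult_right_mono)
qed

lemma sum_shells_le:
  fixes N :: int and B :: real
  assumes N: "N \<ge> 0" and B: "B \<ge> 1" and ks: "k < s"
  shows "(\<Sum>m=1..N. 2 * real s * 3 ^ (s - 1) * real_of_int m ^ (s - 1) *
           (B ^ (s - 1) / real_of_int m ^ k + 3 ^ (s - 1) * B ^ (s - 1) / B))
    \<le> 2 * real s * 9 ^ s * (B ^ (s - 1) * real_of_int N ^ (s - k) + B ^ (s - 1) / B * real_of_int N ^ s)"
proof -
  define n where "n = real_of_int N"
  define C where "C = 2 * real s * 3 ^ (s - 1)"
  define Y where "Y = B ^ (s - 1) / B"
  have C: "C \<ge> 0" and Y: "Y \<ge> 0" using B by (auto simp: C_def Y_def)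
  have "C * real_of_int m ^ (s - 1) * (B ^ (s - 1) / real_of_int m ^ k + 3 ^ (s - 1) * Y)
      \<le> C * (B ^ (s - 1) * n ^ (s - 1 - k) + 3 ^ (s - 1) * Y * n ^ (s - 1))"
    if m: "m \<in> {1..N}" for m
  proof -
    have m1: "1 \<le> real_of_int m" and mn: "real_of_int m \<le> n" using m by (auto simp: n_def)
    have cancel: "real_of_int m ^ (s - 1) / real_of_int m ^ k = real_of_int m ^ (s - 1 - k)"
      using m1 ks by (simp add: power_diff)
    have "real_of_int m ^ (s - 1) * (B ^ (s - 1) / real_of_int m ^ k + 3 ^ (s - 1) * Y)
        = B ^ (s - 1) * (real_of_int m ^ (s - 1) / real_of_int m ^ k)
          + 3 ^ (s - 1) * Y * real_of_int m ^ (s - 1)"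
      by (simp add: algebra_simps)
    also have "\<dots> = B ^ (s - 1) * real_of_int m ^ (s - 1 - k) + 3 ^ (s - 1) * Y * real_of_int m ^ (s - 1)"
      by (simp only: cancel)
    also have "\<dots> \<le> B ^ (s - 1) * n ^ (s - 1 - k) + 3 ^ (s - 1) * Y * n ^ (s - 1)"
      using m1 mn B Y by (intro add_mono mult_left_mono power_mono) auto
    finally show ?thesis using C by (simp add: mult.assoc mult_left_mono)
  qed
  then have "(\<Sum>m=1..N. C * real_of_int m ^ (s - 1) * (B ^ (s - 1) / real_of_int m ^ k + 3 ^ (s - 1) * Y))
      \<le> real (card {1..N}) * (C * (B ^ (s - 1) * n ^ (s - 1 - k) + 3 ^ (s - 1) * Y * n ^ (s - 1)))"
    by (rule sum_bounded_above)
  also have "\<dots> = C * (B ^ (s - 1) * n ^ Suc (s - 1 - k) + 3 ^ (s - 1) * Y * n ^ Suc (s - 1))"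
    using N by (simp add: n_def algebra_simps)
  also have "\<dots> = C * (B ^ (s - 1) * n ^ (s - k) + 3 ^ (s - 1) * Y * n ^ s)"
    using ks by (simp add: Suc_diff_Suc)
  also have "\<dots> = 2 * real s * (3 ^ (s - 1) * (B ^ (s - 1) * n ^ (s - k) + 3 ^ (s - 1) * (Y * n ^ s)))"
    by (simp add: C_def algebra_simps)
  also have "\<dots> \<le> 2 * real s * (9 ^ s * (B ^ (s - 1) * n ^ (s - k) + Y * n ^ s))"
    using N B Y by (intro mult_left_mono three_power_mix_le) (auto simp: n_def)
  finally show ?thesis by (simp add: C_def Y_def n_def mult.assoc)
qed

lemma powers_of_height_le:
  fixes n c A :: real
  assumes n: "0 \<le> n" "n \<le> c * A powr (1 / (real s - real k))" and c: "0 < c" "c \<le> 1"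
    and A: "1 \<le> A" and ks: "k < s" "2 * k \<le> s"
  shows "n ^ (s - k) \<le> c * A" and "n ^ s \<le> c * A ^ 2"
proof -
  define X where "X = A powr (1 / (real s - real k))"
  have d: "real s - real k = real (s - k)" "real (s - k) > 0" using ks by auto
  have "X ^ (s - k) = A powr (real (s - k) * (1 / (real s - real k)))"
    using A by (simp add: X_def powr_power)
  also have "\<dots> = A" using A d by simp
  finally have "X ^ (s - k) = A" .
  have "n ^ (s - k) \<le> (c * X) ^ (s - k)"
    using n by (intro power_mono) (auto simp: X_def)
  also have "\<dots> = c ^ (s - k) * A"
    by (simp add: power_mult_distrib \<open>X ^ (s - k) = A\<close>)
  also have "\<dots> \<le> c * A"
    using c A ks by (intro mult_right_mono power_le_one_iff[THEN iffD2] power_decreasing[of 1, simplified]) auto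
  finally show "n ^ (s - k) \<le> c * A" .
  have "X ^ s = A powr (real s * (1 / (real s - real k)))"
    using A by (simp add: X_def powr_power)
  also have "\<dots> \<le> A powr 2"
    using A ks d by (intro powr_mono) (auto simp: divide_le_eq)
  finally have "X ^ s \<le> A ^ 2" using A by (simp add: powr_realpow)
  have "n ^ s \<le> (c * X) ^ s"
    using n by (intro power_mono) (auto simp: X_def)
  also have "\<dots> = c ^ s * X ^ s"
    by (simp add: power_mult_distrib)
  also have "\<dots> \<le> c * A ^ 2"
    using c ks \<open>X ^ s \<le> A ^ 2\<close> by (intro mult_mono power_decreasing[of 1, simplified]) (auto simp: X_def)
  finally show "n ^ s \<le> c * A ^ 2" .
qed

lemma shell_terms_le:
  fixes A B c n :: real
  assumes A: "1 \<le> A" and B: "1 \<le> B" "B \<le> 3 * A" and s: "2 \<le> s" and c: "0 \<le> c"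
    and n: "0 \<le> n" "n ^ (s - k) \<le> c * A" "n ^ s \<le> c * A ^ 2"
  shows "B ^ (s - 1) * n ^ (s - k) + B ^ (s - 1) / B * n ^ s \<le> 3 ^ s * c * A ^ s"
proof -
  have "B ^ (s - 1) / B = B ^ (s - 2)"
    using B s by (simp add: power_diff power2_eq_square)
  have "B ^ (s - 1) * n ^ (s - k) \<le> (3 * A) ^ (s - 1) * (c * A)"
    using B n by (intro mult_mono power_mono) auto
  also have "\<dots> = 3 ^ (s - 1) * c * A ^ Suc (s - 1)"
    by (simp add: power_mult_distrib)
  finally have first: "B ^ (s - 1) * n ^ (s - k) \<le> 3 ^ (s - 1) * c * A ^ s"
    using s by simp
  have "B ^ (s - 2) * n ^ s \<le> (3 * A) ^ (s - 2) * (c * A ^ 2)"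
    using B n by (intro mult_mono power_mono) auto
  also have "\<dots> = 3 ^ (s - 2) * c * A ^ (s - 2 + 2)"
    by (simp add: power_mult_distrib power_add power2_eq_square)
  finally have second: "B ^ (s - 2) * n ^ s \<le> 3 ^ (s - 2) * c * A ^ s"
    using s by (simp only: le_add_diff_inverse2)
  have "B ^ (s - 1) * n ^ (s - k) + B ^ (s - 1) / B * n ^ s \<le> (3 ^ (s - 1) + 3 ^ (s - 2)) * (c * A ^ s)"
    using first second \<open>B ^ (s - 1) / B = B ^ (s - 2)\<close> by (simp add: algebra_simps)
  also have "\<dots> \<le> 3 ^ s * (c * A ^ s)"
  proof (rule mult_right_mono)
    obtain t where "s = t + 2" using le_add_diff_inverse2[OF s] by metis
    then show "(3::real) ^ (s - 1) + 3 ^ (s - 2) \<le> 3 ^ s" by (simp add: power_add)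
  qed (use c A in auto)
  finally show ?thesis by (simp add: mult.assoc)
qed

lemma coeffs_with_small_zero_subset:
  fixes A c :: real
  assumes c: "0 < c" and ks: "k < s"
  shows "{a. length a = s \<and> (\<forall>i\<in>set a. i \<noteq> 0) \<and> real_of_int (supnorm a) \<le> A \<and>
      (\<exists>x. length x = s \<and> 0 < supnorm x \<and>
        real_of_int (supnorm x) \<le> c * real_of_int (supnorm a) powr (1 / (real s - real k)) \<and>
        diag_form k a x = 0)}
    \<subseteq> {a. length a = s \<and> set a \<subseteq> {-\<lfloor>A\<rfloor>..\<lfloor>A\<rfloor>} \<and>
      (\<exists>x. length x = s \<and> 0 < supnorm x \<and> supnorm x \<le> \<lfloor>c * A powr (1 / (real s - real k))\<rfloor> \<and>
        diag_form k a x = 0)}"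
    (is "?T \<subseteq> ?S")
proof
  let ?e = "1 / (real s - real k)"
  fix a assume "a \<in> ?T"
  then obtain x where a: "length a = s" "real_of_int (supnorm a) \<le> A" and x: "length x = s"
    "0 < supnorm x" "real_of_int (supnorm x) \<le> c * real_of_int (supnorm a) powr ?e"
    "diag_form k a x = 0" by blast
  have "\<bar>t\<bar> \<le> \<lfloor>A\<rfloor>" if "t \<in> set a" for t
    using abs_le_supnorm[OF that] a(2) by (simp add: le_floor_iff)
  then have "set a \<subseteq> {-\<lfloor>A\<rfloor>..\<lfloor>A\<rfloor>}" by (fastforce simp: abs_le_iff)
  moreover have "real_of_int (supnorm a) powr ?e \<le> A powr ?e"
    using a(2) ks supnorm_nonneg[of a] by (intro powr_mono2) auto
  with x(3) c have "supnorm x \<le> \<lfloor>c * A powr ?e\<rfloor>"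
    by (simp add: le_floor_iff) (meson mult_left_mono order_trans less_imp_le)
  ultimately show "a \<in> ?S" using a x by blast
qed

lemma card_coeffs_with_small_zero_le:
  fixes k s :: nat and \<eta> c :: real
  assumes k: "1 \<le> k" "2 * k \<le> s" and c: "0 < c" "c \<le> 1" and small: "2 * real s * 27 ^ s * c \<le> \<eta>"
  shows "\<forall>A::real. A \<ge> 1 \<longrightarrow>
      real (card {a :: int list. length a = s \<and> (\<forall>i\<in>set a. i \<noteq> 0) \<and>
                 real_of_int (supnorm a) \<le> A \<and>
                 (\<exists>x :: int list. length x = s \<and> 0 < supnorm x \<and>
                    real_of_int (supnorm x) \<le> c * (real_of_int (supnorm a)) powr (1 / (real s - real k)) \<and>
                    diag_form k a x = 0)})
      \<le> \<eta> * A ^ s"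
    (is "\<forall>A. _ \<longrightarrow> real (card (?T A)) \<le> _")
proof (intro allI impI)
  fix A :: real assume A: "A \<ge> 1"
  have ks: "k < s" "2 * k \<le> s" "2 \<le> s" using k by auto
  let ?e = "1 / (real s - real k)"
  define N where "N = \<lfloor>c * A powr ?e\<rfloor>"
  define B where "B = real_of_int (2 * \<lfloor>A\<rfloor> + 1)"
  let ?S = "{a. length a = s \<and> set a \<subseteq> {-\<lfloor>A\<rfloor>..\<lfloor>A\<rfloor>} \<and>
    (\<exists>x. length x = s \<and> 0 < supnorm x \<and> supnorm x \<le> N \<and> diag_form k a x = 0)}"
  have N: "N \<ge> 0" "real_of_int N \<le> c * A powr ?e"
    using c by (auto simp: N_def)
  have "real_of_int \<lfloor>A\<rfloor> \<le> A" "1 \<le> \<lfloor>A\<rfloor>" using A by (auto simp: le_floor_iff)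
  then have B: "1 \<le> B" "B \<le> 3 * A"
    using A unfolding B_def by linarith+
  have "?T A \<subseteq> ?S"
    unfolding N_def using coeffs_with_small_zero_subset[OF c(1) ks(1)] .
  moreover have "finite ?S"
    by (rule finite_subset[OF _ finite_int_cube[of s "\<lfloor>A\<rfloor>"]]) (auto simp: int_cube_def)
  ultimately have "real (card (?T A)) \<le> real (card ?S)"
    by (simp add: card_mono)
  also have "\<dots> \<le> 2 * real s * 9 ^ s *
      (B ^ (s - 1) * real_of_int N ^ (s - k) + B ^ (s - 1) / B * real_of_int N ^ s)"
    using card_coeffs_with_zero_in_box_le[of "\<lfloor>A\<rfloor>" s N k] sum_shells_le[OF N(1) B(1) ks(1)] A ks
    by (simp add: B_def)
  also have "\<dots> \<le> 2 * real s * 9 ^ s * (3 ^ s * c * A ^ s)"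
    using shell_terms_le[OF A B ks(3) _ _ powers_of_height_le[OF _ N(2) c A ks(1,2)]] c N
    by (intro mult_left_mono) auto
  also have "\<dots> \<le> \<eta> * A ^ s"
    using small A by (simp add: power_mult_distrib[symmetric] mult.assoc[symmetric] mult_right_mono)
  finally show "real (card (?T A)) \<le> \<eta> * A ^ s" .
qed

theorem theorem1p4:
  fixes k s :: nat and \<eta> :: real
  assumes "k \<ge> 3" and "s \<ge> 2 * k" and "\<eta> > 0"
  shows "\<exists>c::real. c > 0 \<and>
    (\<forall>A::real. A \<ge> 1 \<longrightarrow>
      real (card {a :: int list. length a = s \<and> (\<forall>i\<in>set a. i \<noteq> 0) \<and>
                 real_of_int (supnorm a) \<le> A \<and>
                 (\<exists>x :: int list. length x = s \<and> 0 < supnorm x \<and>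
                    real_of_int (supnorm x) \<le> c * (real_of_int (supnorm a)) powr (1 / (real s - real k)) \<and>
                    diag_form k a x = 0)})
      \<le> \<eta> * A ^ s)"
proof -
  define K where "K = 2 * real s * 27 ^ s"
  define c where "c = min 1 (\<eta> / K)"
  have "K > 0" using assms by (simp add: K_def)
  with assms(3) have "0 < c" "c \<le> 1" "K * c \<le> \<eta>"
    by (auto simp: c_def min_def field_simps)
  moreover have "1 \<le> k" "2 * k \<le> s" using assms by auto
  ultimately show ?thesis
    by (intro exI[of _ c] conjI card_coeffs_with_small_zero_le) (auto simp: K_def)
qed

end
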